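(* Let $X$ be a real Banach space and $D\subset X$ dense. Then: (1) $X$ is LOH if and only if for every $\varepsilon>0$ and $x\in D$ there exists $y\in D$ with $\|y\|\ne0$, $\big\|\|y\|x-\|x\|y\big\|>\|y\|(2\|x\|-\varepsilon)$ and $\big\|\|y\|x+\|x\|y\big\|>\|y\|(2\|x\|-\varepsilon)$; (2) $X$ is OH if and only if for every $\varepsilon>0$, $n\in\mathbb{N}$ and $x=(x_1,\dots,x_n)\in D^n$ there exists $y\in D$ with $\|y\|\ne0$ and $\big\|\|y\|x_i+\|x_i\|y\big\|>\|y\|(2\|x_i\|-\varepsilon)$ for all $i=1,\dots,n$.
   Context: $X$ is locally octahedral (LOH) if for every $\varepsilon>0$ and $x\in X$ there is $y\in S_X$ with $\|tx+y\|\ge(1-\varepsilon)(|t|\|x\|+\|y\|)$ for all $t\in\mathbb{R}$. $X$ is octahedral (OH) if for every finite-dimensional subspace $E\subset X$ and $\varepsilon>0$ there is $y\in S_X$ with $\|x+y\|\ge(1-\varepsilon)(\|x\|+\|y\|)$ for all $x\in E$. *)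

theory Defs
  imports "HOL-Analysis.Analysis"
begin

definition LOH :: "'a::real_normed_vector itself \<Rightarrow> bool" where
  "LOH _ \<longleftrightarrow> (\<forall>\<epsilon>>0. \<forall>x::'a. \<exists>y::'a. norm y = 1 \<and>
     (\<forall>t::real. norm (t *\<^sub>R x + y) \<ge> (1 - \<epsilon>) * (\<bar>t\<bar> * norm x + norm y)))"

definition OH :: "'a::real_normed_vector itself \<Rightarrow> bool" where
  "OH _ \<longleftrightarrow> (\<forall>E::'a set. \<forall>\<epsilon>>0. (subspace E \<and> (\<exists>B. finite B \<and> E = span B)) \<longrightarrow>
     (\<exists>y::'a. norm y = 1 \<and> (\<forall>x\<in>E. norm (x + y) \<ge> (1 - \<epsilon>) * (norm x + norm y))))"

end

theory Submission
  imports Defs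
begin

(* For all x and y, norm (norm y *R x + norm x *R y) = norm x * norm y * norm (sgn x + sgn y), so the
   criteria say that sgn x + sgn y (and sgn x - sgn y) almost have norm 2. For unit vectors e, v with
   norm (e + v) >= 2 - gamma the triangle inequality gives norm (s e + v) >= (1 - gamma) (s + 1) for all
   s >= 0, which is the octahedral estimate, and it survives small perturbations of e.
   Necessity: the criterion is an open condition on y that holds for the unit vector provided by the
   definition, so by density it holds for some y in D. Sufficiency: approximate x by a point of D (for
   OH, cover the compact unit sphere of the finite-dimensional subspace by finitely many small balls
   centred in D) and apply the criterion at these finitely many points. *)

lemma closed_if_compact_Int_cball:
  fixes S :: "'a::real_normed_vector set"
  assumes "\<And>r. compact (S \<inter> cball 0 r)"
  shows "closed S"
proof -
  have "x \<in> S" if "x \<in> closure S" for x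
  proof -
    define R where "R = norm x + 1"
    have "x \<in> ball 0 R \<inter> closure S" using that by (simp add: R_def)
    also have "\<dots> \<subseteq> closure (ball 0 R \<inter> S)" by (simp add: open_Int_closure_subset)
    also have "\<dots> \<subseteq> closure (S \<inter> cball 0 R)" by (intro closure_mono) auto
    also have "\<dots> = S \<inter> cball 0 R" using assms compact_imp_closed closure_closed by blast
    finally show ?thesis by blast
  qed
  then show ?thesis using closure_subset_eq by blast
qed

lemma norm_add_scaleR_ge_infdist:
  fixes b z :: "'a::real_normed_vector"
  assumes "subspace S" "z \<in> S"
  shows "\<bar>t\<bar> * infdist b S \<le> norm (z + t *\<^sub>R b)"
proof (cases "t = 0")
  case False
  have "- (1 / t) *\<^sub>R z \<in> S" using assms by (simp add: subspace_neg subspace_scale)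
  then have "infdist b S \<le> norm (b - - (1 / t) *\<^sub>R z)"
    using infdist_le by (metis dist_norm)
  then have "\<bar>t\<bar> * infdist b S \<le> \<bar>t\<bar> * norm (b - - (1 / t) *\<^sub>R z)"
    by (simp add: mult_left_mono)
  also have "\<dots> = norm (t *\<^sub>R (b - - (1 / t) *\<^sub>R z))" by simp
  also have "t *\<^sub>R (b - - (1 / t) *\<^sub>R z) = z + t *\<^sub>R b" using False by (simp add: algebra_simps)
  finally show ?thesis .
qed simp

lemma compact_span_insert_Int_cball:
  fixes b :: "'a::real_normed_vector"
  assumes compact: "\<And>r. compact (span B \<inter> cball 0 r)" and "b \<notin> span B"
  shows "compact (span (insert b B) \<inter> cball 0 r)"
proof -
  define \<eta> where "\<eta> = infdist b (span B)"
  have "\<eta> > 0"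
    unfolding \<eta>_def using assms closed_if_compact_Int_cball span_zero
    by (metis empty_iff infdist_pos_not_in_closed)
  define T where "T = r / \<eta>"
  define Z where "Z = span B \<inter> cball 0 (r + T * norm b)"
  define W where "W = {z + c | z c. z \<in> Z \<and> c \<in> (\<lambda>t. t *\<^sub>R b) ` {-T..T}}"
  have "compact W"
    unfolding W_def Z_def
    by (intro compact_sums compact compact_continuous_image continuous_intros compact_Icc)
  have "span B \<subseteq> span (insert b B)" by (rule span_mono) blast
  then have "W \<subseteq> span (insert b B)"
    unfolding W_def Z_def by (auto intro!: span_add span_scale intro: span_base)
  moreover have "span (insert b B) \<inter> cball 0 r \<subseteq> W"
  proof
    fix w assume w: "w \<in> span (insert b B) \<inter> cball 0 r"
    then obtain t where z: "w - t *\<^sub>R b \<in> span B" by (auto simp: span_breakdown_eq)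
    have "\<bar>t\<bar> * \<eta> \<le> norm w"
      using norm_add_scaleR_ge_infdist[OF subspace_span z, of t b] by (simp add: \<eta>_def)
    then have t: "\<bar>t\<bar> \<le> T" using w \<open>\<eta> > 0\<close> by (simp add: T_def field_simps)
    have "norm (w - t *\<^sub>R b) \<le> norm w + \<bar>t\<bar> * norm b"
      using norm_triangle_ineq4[of w "t *\<^sub>R b"] by simp
    also have "\<dots> \<le> r + T * norm b" using w t by (intro add_mono mult_right_mono) auto
    finally have "w - t *\<^sub>R b \<in> Z" using z by (simp add: Z_def)
    then show "w \<in> W" using t unfolding W_def by force
  qed
  ultimately have "span (insert b B) \<inter> cball 0 r = W \<inter> cball 0 r" by blast
  then show ?thesis using \<open>compact W\<close> by (simp add: compact_Int_closed)
qed

(* Balls of finite-dimensional subspaces are compact in every normed space; the library proves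
   closedness of spans only for euclidean_space. *)
lemma compact_span_Int_cball:
  fixes B :: "'a::real_normed_vector set"
  assumes "finite B"
  shows "compact (span B \<inter> cball 0 r)"
  using assms
proof (induction B arbitrary: r rule: finite_induct)
  case empty
  have "span ({}::'a set) \<inter> cball 0 r \<subseteq> {0}" by auto
  then show ?case using finite_subset finite_imp_compact by blast
next
  case (insert b B)
  then show ?case
    by (cases "b \<in> span B") (auto simp: span_redundant intro: compact_span_insert_Int_cball)
qed

lemma dense_finite_ball_cover:
  fixes D :: "'a::metric_space set"
  assumes "compact K" "closure D = UNIV" "\<delta> > 0"
  obtains F where "F \<subseteq> D" "finite F" "K \<subseteq> (\<Union>d\<in>F. ball d \<delta>)"
proof -
  have "K \<subseteq> (\<Union>d\<in>D. ball d \<delta>)"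
    using assms(2,3) closure_approachableD[of _ D] by (fastforce simp: dist_commute)
  then show ?thesis using compactE_image[OF assms(1)] that by (metis open_ball)
qed

lemma dense_Int_open_nonempty:
  assumes "closure D = UNIV" "open U" "y \<in> U"
  obtains d where "d \<in> D" "d \<in> U"
  using open_Int_closure_eq_empty[OF assms(2), of D] assms by auto

lemma norm_scaleR_norm_add:
  fixes x y :: "'a::real_normed_vector"
  shows "norm (norm y *\<^sub>R x + norm x *\<^sub>R y) = norm x * norm y * norm (sgn x + sgn y)"
proof (cases "x = 0 \<or> y = 0")
  case False
  then have "norm y *\<^sub>R x + norm x *\<^sub>R y = (norm x * norm y) *\<^sub>R (sgn x + sgn y)"
    by (simp add: sgn_div_norm algebra_simps)
  then show ?thesis by simp
qed auto

lemma norm_scaleR_norm_add_gt_iff: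
  fixes x y :: "'a::real_normed_vector"
  assumes "x \<noteq> 0" "y \<noteq> 0"
  shows "norm y * (2 * norm x - \<epsilon>) < norm (norm y *\<^sub>R x + norm x *\<^sub>R y)
    \<longleftrightarrow> 2 - \<epsilon> / norm x < norm (sgn x + sgn y)"
proof -
  have "norm y * (2 * norm x - \<epsilon>) < norm (norm y *\<^sub>R x + norm x *\<^sub>R y)
      \<longleftrightarrow> norm y * (2 * norm x - \<epsilon>) < norm y * (norm x * norm (sgn x + sgn y))"
    by (simp add: norm_scaleR_norm_add ac_simps)
  also have "\<dots> \<longleftrightarrow> 2 * norm x - \<epsilon> < norm x * norm (sgn x + sgn y)"
    using assms(2) by simp
  also have "\<dots> \<longleftrightarrow> 2 - \<epsilon> / norm x < norm (sgn x + sgn y)"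
    using assms(1) by (simp add: field_simps)
  finally show ?thesis .
qed

lemma norm_scaleR_norm_add_gt_of_unit:
  fixes x v :: "'a::real_normed_vector"
  assumes "norm v = 1" "norm x * (2 - norm (sgn x + v)) < \<epsilon>"
  shows "norm v * (2 * norm x - \<epsilon>) < norm (norm v *\<^sub>R x + norm x *\<^sub>R v)"
proof -
  have "sgn v = v" using assms(1) by (simp add: sgn_div_norm)
  then show ?thesis using assms unfolding norm_scaleR_norm_add by (simp add: algebra_simps)
qed

lemma norm_sgn_diff_le:
  fixes x d :: "'a::real_normed_vector"
  assumes "x \<noteq> 0"
  shows "norm (sgn x - sgn d) \<le> 2 * norm (x - d) / norm x"
proof (cases "d = 0")
  case False
  have "1 / norm x - 1 / norm d = (norm d - norm x) / (norm x * norm d)"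
    using assms False by (simp add: field_simps)
  then have second: "norm ((1 / norm x - 1 / norm d) *\<^sub>R d) = \<bar>norm d - norm x\<bar> / norm x"
    using False by (simp add: abs_divide)
  have "sgn x - sgn d = (1 / norm x) *\<^sub>R (x - d) + (1 / norm x - 1 / norm d) *\<^sub>R d"
    by (simp add: sgn_div_norm scaleR_diff_right scaleR_diff_left divide_inverse)
  then have "norm (sgn x - sgn d)
      \<le> norm ((1 / norm x) *\<^sub>R (x - d)) + norm ((1 / norm x - 1 / norm d) *\<^sub>R d)"
    by (simp only: norm_triangle_ineq)
  also have "\<dots> = norm (x - d) / norm x + \<bar>norm d - norm x\<bar> / norm x"
    unfolding second by simp
  also have "\<bar>norm d - norm x\<bar> \<le> norm (x - d)"
    by (metis norm_minus_commute norm_triangle_ineq3)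
  finally show ?thesis using assms by (simp add: divide_right_mono add_divide_distrib[symmetric])
qed (use assms in \<open>simp add: norm_sgn\<close>)

lemma norm_scaleR_add_lower_bound:
  fixes e v :: "'a::real_normed_vector"
  assumes "norm e = 1" "norm v = 1" "2 - \<gamma> \<le> norm (e + v)" "0 \<le> \<gamma>" "0 \<le> s"
  shows "(1 - \<gamma>) * (s + 1) \<le> norm (s *\<^sub>R e + v)"
proof (cases "1 \<le> s")
  case True
  have "s *\<^sub>R e + v = s *\<^sub>R (e + v) - (s - 1) *\<^sub>R v" by (simp add: algebra_simps)
  then have "norm (s *\<^sub>R (e + v)) - norm ((s - 1) *\<^sub>R v) \<le> norm (s *\<^sub>R e + v)"
    by (metis norm_triangle_ineq2)
  moreover have "s * (2 - \<gamma>) \<le> norm (s *\<^sub>R (e + v))"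
    using assms(3,5) by (simp add: mult_left_mono)
  moreover have "norm ((s - 1) *\<^sub>R v) = s - 1" using True assms(2) by simp
  moreover have "(1 - \<gamma>) * (s + 1) \<le> s * (2 - \<gamma>) - (s - 1)"
    using assms(4) by (simp add: algebra_simps)
  ultimately show ?thesis by linarith
next
  case False
  have "s *\<^sub>R e + v = (e + v) - (1 - s) *\<^sub>R e" by (simp add: algebra_simps)
  then have "norm (e + v) - norm ((1 - s) *\<^sub>R e) \<le> norm (s *\<^sub>R e + v)"
    by (metis norm_triangle_ineq2)
  moreover have "norm ((1 - s) *\<^sub>R e) = 1 - s" using False assms(1) by simp
  moreover have "(1 - \<gamma>) * (s + 1) \<le> 1 + s - \<gamma>"
    using assms(4,5) by (simp add: algebra_simps)
  ultimately show ?thesis using assms(3) by linarith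
qed

lemma norm_scaleR_add_lower_bound_perturbed:
  fixes u e v :: "'a::real_normed_vector"
  assumes "norm e = 1" "norm v = 1" "2 - \<gamma> \<le> norm (e + v)" "0 \<le> \<gamma>" "0 \<le> s"
    and "norm (u - e) \<le> \<alpha>"
  shows "(1 - \<gamma> - \<alpha>) * (s + 1) \<le> norm (s *\<^sub>R u + v)"
proof -
  have "s *\<^sub>R e + v = (s *\<^sub>R u + v) - s *\<^sub>R (u - e)" by (simp add: algebra_simps)
  then have "norm (s *\<^sub>R e + v) \<le> norm (s *\<^sub>R u + v) + norm (s *\<^sub>R (u - e))"
    by (simp only: norm_triangle_ineq4)
  then have "norm (s *\<^sub>R e + v) \<le> norm (s *\<^sub>R u + v) + s * norm (u - e)"
    using assms(5) by simp
  moreover have "s * norm (u - e) \<le> s * \<alpha>" using assms(5,6) by (rule mult_left_mono[rotated])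
  moreover have "0 \<le> \<alpha>" using assms(6) norm_ge_zero order_trans by blast
  ultimately show ?thesis
    using norm_scaleR_add_lower_bound[OF assms(1-5)] by (simp add: algebra_simps)
qed

lemma dense_criterion_of_unit_witness:
  fixes D X :: "'a::real_normed_vector set"
  assumes "closure D = UNIV" "finite X" "norm v = 1"
    and "\<And>x. x \<in> X \<Longrightarrow> norm x * (2 - norm (sgn x + v)) < \<epsilon>"
  shows "\<exists>y\<in>D. norm y \<noteq> 0 \<and>
    (\<forall>x\<in>X. norm y * (2 * norm x - \<epsilon>) < norm (norm y *\<^sub>R x + norm x *\<^sub>R y))"
proof -
  define U where "U = {y. norm y \<noteq> 0} \<inter>
    (\<Inter>x\<in>X. {y. norm y * (2 * norm x - \<epsilon>) < norm (norm y *\<^sub>R x + norm x *\<^sub>R y)})"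
  have "open U"
    unfolding U_def using assms(2)
    by (intro open_Int open_INT ballI open_Collect_neq open_Collect_less continuous_intros)
  moreover have "v \<in> U"
    unfolding U_def using assms(3,4) norm_scaleR_norm_add_gt_of_unit by fastforce
  ultimately obtain y where "y \<in> D" "y \<in> U" using dense_Int_open_nonempty[OF assms(1)] by blast
  then show ?thesis unfolding U_def by blast
qed

lemma ex_pos_mult_less:
  fixes a \<epsilon> :: real
  assumes "\<epsilon> > 0"
  shows "\<exists>\<delta>>0. \<delta> * a < \<epsilon>"
proof -
  define \<delta> where "\<delta> = \<epsilon> / (\<bar>a\<bar> + 1)"
  have "\<bar>a\<bar> + 1 > 0" by (simp add: add_nonneg_pos)
  then have "\<delta> > 0" using assms by (simp add: \<delta>_def)
  then have "\<delta> * a < \<delta> * (\<bar>a\<bar> + 1)" by (intro mult_strict_left_mono) auto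
  also have "\<dots> = \<epsilon>" using \<open>\<bar>a\<bar> + 1 > 0\<close> by (simp add: \<delta>_def)
  finally show ?thesis using \<open>\<delta> > 0\<close> by blast
qed

lemma LOH_imp_dense_criterion:
  fixes D :: "'a::real_normed_vector set" and x :: 'a
  assumes "closure D = UNIV" "LOH TYPE('a)" "\<epsilon> > 0"
  shows "\<exists>y\<in>D. norm y \<noteq> 0 \<and>
    norm (norm y *\<^sub>R x - norm x *\<^sub>R y) > norm y * (2 * norm x - \<epsilon>) \<and>
    norm (norm y *\<^sub>R x + norm x *\<^sub>R y) > norm y * (2 * norm x - \<epsilon>)"
proof -
  obtain \<delta> where "\<delta> > 0" and \<delta>: "\<delta> * (2 * norm x) < \<epsilon>" using ex_pos_mult_less[OF assms(3)] by blast
  then obtain v where v: "norm v = 1"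
    and lower: "\<And>t. (1 - \<delta>) * (\<bar>t\<bar> * norm x + norm v) \<le> norm (t *\<^sub>R x + v)"
    using assms(2) unfolding LOH_def by blast
  have "norm z * (2 - norm (sgn z + v)) < \<epsilon>" if "z \<in> {x, - x}" for z
  proof (cases "x = 0")
    case False
    have "(1 - \<delta>) * 2 \<le> norm (sgn z + v)"
      using that lower[of "1 / norm x"] lower[of "- 1 / norm x"] v False
      by (auto simp: sgn_div_norm divide_inverse sgn_minus)
    then have "norm z * (2 - norm (sgn z + v)) \<le> norm z * (2 * \<delta>)"
      by (intro mult_left_mono) auto
    also have "\<dots> = \<delta> * (2 * norm x)"
      using that by auto
    finally show ?thesis using \<delta> by linarith
  qed (use that assms(3) in auto)
  from dense_criterion_of_unit_witness[of D "{x, - x}", OF assms(1) _ v this]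
  show ?thesis by (simp add: norm_minus_commute conj_commute)
qed

lemma OH_imp_dense_criterion:
  fixes D :: "'a::real_normed_vector set" and x :: "nat \<Rightarrow> 'a"
  assumes "closure D = UNIV" "OH TYPE('a)" "\<epsilon> > 0"
  shows "\<exists>y\<in>D. norm y \<noteq> 0 \<and>
    (\<forall>i<n. norm (norm y *\<^sub>R x i + norm (x i) *\<^sub>R y) > norm y * (2 * norm (x i) - \<epsilon>))"
proof -
  define M where "M = (\<Sum>i<n. norm (x i))"
  obtain \<delta> where "\<delta> > 0" and \<delta>: "\<delta> * (2 * M) < \<epsilon>" using ex_pos_mult_less[OF assms(3)] by blast
  moreover have "subspace (span (x ` {..<n}))" by (rule subspace_span)
  ultimately obtain v where v: "norm v = 1"
    and lower: "\<And>z. z \<in> span (x ` {..<n}) \<Longrightarrow> (1 - \<delta>) * (norm z + norm v) \<le> norm (z + v)"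
    using assms(2) unfolding OH_def by blast
  have "norm z * (2 - norm (sgn z + v)) < \<epsilon>" if "z \<in> x ` {..<n}" for z
  proof (cases "z = 0")
    case False
    have "sgn z \<in> span (x ` {..<n})"
      using that by (simp add: sgn_div_norm span_base span_scale)
    then have "(1 - \<delta>) * 2 \<le> norm (sgn z + v)"
      using lower v False by (fastforce simp: norm_sgn)
    then have "norm z * (2 - norm (sgn z + v)) \<le> norm z * (2 * \<delta>)"
      by (intro mult_left_mono) auto
    also have "\<dots> \<le> M * (2 * \<delta>)"
      using that \<open>\<delta> > 0\<close> unfolding M_def by (auto intro: mult_right_mono member_le_sum)
    finally show ?thesis using \<delta> by (simp add: ac_simps)
  qed (use assms(3) in auto)
  from dense_criterion_of_unit_witness[of D "x ` {..<n}", OF assms(1) _ v this]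
  show ?thesis by auto
qed

lemma dense_sgn_approx:
  fixes D :: "'a::real_normed_vector set"
  assumes "closure D = UNIV" "x \<noteq> 0" "0 < \<alpha>" "\<alpha> \<le> 1"
  obtains d where "d \<in> D" "d \<noteq> 0" "norm (sgn x - sgn d) < \<alpha>"
proof -
  obtain d where "d \<in> D" "dist x d < \<alpha> * norm x / 2"
    using closure_approachableD[of x D "\<alpha> * norm x / 2"] assms by auto
  then have "2 * norm (x - d) < norm x * \<alpha>" by (simp add: dist_norm field_simps)
  moreover have "norm x * norm (sgn x - sgn d) \<le> 2 * norm (x - d)"
    using norm_sgn_diff_le[OF assms(2), of d] assms(2) by (simp add: field_simps)
  ultimately have "norm x * norm (sgn x - sgn d) < norm x * \<alpha>" by linarith
  then have "norm (sgn x - sgn d) < \<alpha>" using assms(2) by simp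
  moreover have "d \<noteq> 0" using calculation assms(2,4) by (auto simp: norm_sgn)
  ultimately show ?thesis using \<open>d \<in> D\<close> that by blast
qed

lemma norm_scaleR_add_lower_bound_line:
  fixes x e v :: "'a::real_normed_vector"
  assumes "norm e = 1" "norm v = 1" "2 - \<gamma> \<le> norm (e + v)" "2 - \<gamma> \<le> norm (e - v)" "0 \<le> \<gamma>"
    and "norm (sgn x - e) \<le> \<alpha>"
  shows "(1 - \<gamma> - \<alpha>) * (\<bar>t\<bar> * norm x + 1) \<le> norm (t *\<^sub>R x + v)"
proof -
  define c :: real where "c = (if 0 \<le> t then 1 else - 1)"
  have "t *\<^sub>R x = (\<bar>t\<bar> * norm x) *\<^sub>R (c *\<^sub>R sgn x)"
    by (cases "x = 0") (auto simp: c_def sgn_div_norm)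
  moreover have "2 - \<gamma> \<le> norm (c *\<^sub>R e + v)"
    using assms(3,4) by (auto simp: c_def norm_minus_commute)
  moreover have "norm (c *\<^sub>R sgn x - c *\<^sub>R e) \<le> \<alpha>"
    using assms(6) by (auto simp: c_def norm_minus_commute)
  ultimately show ?thesis
    using norm_scaleR_add_lower_bound_perturbed[of "c *\<^sub>R e" v \<gamma> "\<bar>t\<bar> * norm x" "c *\<^sub>R sgn x" \<alpha>]
      assms(1,2,5) by (auto simp: c_def)
qed

lemma dense_criterion_imp_LOH:
  fixes D :: "'a::real_normed_vector set"
  assumes dense: "closure D = UNIV"
    and crit: "\<forall>\<epsilon>>0. \<forall>x\<in>D. \<exists>y\<in>D. norm y \<noteq> 0 \<and>
      norm (norm y *\<^sub>R x - norm x *\<^sub>R y) > norm y * (2 * norm x - \<epsilon>) \<and>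
      norm (norm y *\<^sub>R x + norm x *\<^sub>R y) > norm y * (2 * norm x - \<epsilon>)"
  shows "LOH TYPE('a)"
  unfolding LOH_def
proof (intro allI impI)
  fix \<epsilon> :: real and x :: 'a
  assume "\<epsilon> > 0"
  show "\<exists>v. norm v = 1 \<and> (\<forall>t. (1 - \<epsilon>) * (\<bar>t\<bar> * norm x + norm v) \<le> norm (t *\<^sub>R x + v))"
  proof (cases "x = 0")
    case True
    obtain d where "d \<in> D" using dense by (metis closure_empty empty_not_UNIV ex_in_conv)
    then obtain y :: 'a where "y \<noteq> 0" using crit[rule_format, OF \<open>\<epsilon> > 0\<close> \<open>d \<in> D\<close>] by auto
    then show ?thesis using True \<open>\<epsilon> > 0\<close> by (intro exI[of _ "sgn y"]) (simp add: norm_sgn)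
  next
    case False
    have "0 < min \<epsilon> 1 / 2" "min \<epsilon> 1 / 2 \<le> 1" using \<open>\<epsilon> > 0\<close> by auto
    then obtain d where d: "d \<in> D" "d \<noteq> 0" "norm (sgn x - sgn d) < min \<epsilon> 1 / 2"
      using dense_sgn_approx[OF dense False] by blast
    have "\<epsilon> * norm d / 2 > 0" using \<open>\<epsilon> > 0\<close> d(2) by simp
    then obtain y where "y \<in> D" "y \<noteq> 0"
      and minus: "norm y * (2 * norm d - \<epsilon> * norm d / 2) < norm (norm (- y) *\<^sub>R d + norm d *\<^sub>R - y)"
      and plus: "norm y * (2 * norm d - \<epsilon> * norm d / 2) < norm (norm y *\<^sub>R d + norm d *\<^sub>R y)"
      using crit d(1) by fastforce
    have "2 - \<epsilon> / 2 \<le> norm (sgn d + sgn y)"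
      using plus norm_scaleR_norm_add_gt_iff[OF d(2) \<open>y \<noteq> 0\<close>] d(2) by simp
    moreover have "2 - \<epsilon> / 2 \<le> norm (sgn d - sgn y)"
      using minus norm_scaleR_norm_add_gt_iff[of d "- y"] d(2) \<open>y \<noteq> 0\<close> by (simp add: sgn_minus)
    moreover have "norm (sgn x - sgn d) \<le> \<epsilon> / 2" using d(3) by simp
    ultimately have "(1 - \<epsilon> / 2 - \<epsilon> / 2) * (\<bar>t\<bar> * norm x + 1) \<le> norm (t *\<^sub>R x + sgn y)"
      for t using d(2) \<open>y \<noteq> 0\<close> \<open>\<epsilon> > 0\<close>
      by (intro norm_scaleR_add_lower_bound_line) (auto simp: norm_sgn)
    then show ?thesis using \<open>y \<noteq> 0\<close> by (intro exI[of _ "sgn y"]) (simp add: norm_sgn)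
  qed
qed

lemma norm_add_sgn_lower_bound_near:
  fixes z d y :: "'a::real_normed_vector"
  assumes "z \<noteq> 0" "y \<noteq> 0" "0 \<le> \<gamma>" "norm (sgn z - d) < \<delta>" "\<delta> \<le> 1 / 2"
    and "norm y * (2 * norm d - \<gamma>) < norm (norm y *\<^sub>R d + norm d *\<^sub>R y)"
  shows "(1 - 2 * \<gamma> - 2 * \<delta>) * (norm z + 1) \<le> norm (z + sgn y)"
proof -
  have "norm (sgn z) = 1" using assms(1) by (simp add: norm_sgn)
  then have "1 / 2 \<le> norm d"
    using assms(4,5) norm_triangle_ineq2[of "sgn z" d] by (simp add: norm_minus_commute)
  then have "d \<noteq> 0" by auto
  have "\<gamma> * 1 \<le> \<gamma> * (2 * norm d)"
    using \<open>1 / 2 \<le> norm d\<close> assms(3) by (intro mult_left_mono) auto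
  then have "\<gamma> / norm d \<le> 2 * \<gamma>" using \<open>d \<noteq> 0\<close> by (simp add: divide_le_eq)
  then have "2 - 2 * \<gamma> \<le> norm (sgn d + sgn y)"
    using assms(6) norm_scaleR_norm_add_gt_iff[OF \<open>d \<noteq> 0\<close> assms(2)] by simp
  moreover have "norm (sgn z - sgn d) \<le> 2 * \<delta>"
    using norm_sgn_diff_le[of "sgn z" d] assms(1,4) \<open>norm (sgn z) = 1\<close> by (simp add: sgn_div_norm)
  ultimately have "(1 - 2 * \<gamma> - 2 * \<delta>) * (norm z + 1) \<le> norm (norm z *\<^sub>R sgn z + sgn y)"
    using \<open>d \<noteq> 0\<close> assms(2,3)
    by (intro norm_scaleR_add_lower_bound_perturbed) (auto simp: norm_sgn)
  moreover have "norm z *\<^sub>R sgn z = z" using assms(1) by (simp add: sgn_div_norm)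
  ultimately show ?thesis by simp
qed

lemma dense_net_span_sphere:
  fixes D :: "'a::real_normed_vector set"
  assumes "finite B" "closure D = UNIV" "\<delta> > 0"
  obtains n and x :: "nat \<Rightarrow> 'a" where "\<forall>i<n. x i \<in> D"
    and "\<And>z. z \<in> span B \<Longrightarrow> norm z = 1 \<Longrightarrow> \<exists>i<n. norm (z - x i) < \<delta>"
proof -
  have "closed (sphere (0::'a) 1)" unfolding sphere_def by (intro closed_Collect_eq continuous_intros)
  then have "compact (span B \<inter> cball 0 1 \<inter> sphere (0::'a) 1)"
    by (intro compact_Int_closed[OF compact_span_Int_cball[OF assms(1)]])
  moreover have "span B \<inter> cball 0 1 \<inter> sphere 0 1 = span B \<inter> sphere (0::'a) 1" by auto
  ultimately have "compact (span B \<inter> sphere (0::'a) 1)" by simp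
  then obtain F where "F \<subseteq> D" "finite F" and F: "span B \<inter> sphere 0 1 \<subseteq> (\<Union>d\<in>F. ball d \<delta>)"
    using dense_finite_ball_cover[OF _ assms(2,3)] by blast
  obtain n :: nat and x :: "nat \<Rightarrow> 'a" where Fx: "F = x ` {..<n}"
    using \<open>finite F\<close> by (metis finite_conv_nat_seg_image lessThan_def)
  show ?thesis
  proof (rule that[of n x])
    show "\<forall>i<n. x i \<in> D" using \<open>F \<subseteq> D\<close> Fx by auto
    fix z assume "z \<in> span B" "norm z = 1"
    then obtain d where "d \<in> F" "dist d z < \<delta>" using F by auto
    then show "\<exists>i<n. norm (z - x i) < \<delta>" using Fx by (auto simp: dist_norm norm_minus_commute)
  qed
qed

lemma dense_criterion_imp_OH:
  fixes D :: "'a::real_normed_vector set"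
  assumes dense: "closure D = UNIV"
    and crit: "\<forall>\<epsilon>>0. \<forall>n::nat. \<forall>x::nat \<Rightarrow> 'a. (\<forall>i<n. x i \<in> D) \<longrightarrow>
      (\<exists>y\<in>D. norm y \<noteq> 0 \<and>
        (\<forall>i<n. norm (norm y *\<^sub>R x i + norm (x i) *\<^sub>R y) > norm y * (2 * norm (x i) - \<epsilon>)))"
  shows "OH TYPE('a)"
  unfolding OH_def
proof (intro allI impI)
  fix E :: "'a set" and \<epsilon> :: real
  assume "\<epsilon> > 0" and "subspace E \<and> (\<exists>B. finite B \<and> E = span B)"
  then obtain B where "finite B" and E: "E = span B" by blast
  define \<delta> where "\<delta> = min \<epsilon> 1 / 8"
  have "\<delta> > 0" using \<open>\<epsilon> > 0\<close> by (simp add: \<delta>_def)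
  obtain n and x :: "nat \<Rightarrow> 'a" where "\<forall>i<n. x i \<in> D"
    and net: "\<And>z. z \<in> span B \<Longrightarrow> norm z = 1 \<Longrightarrow> \<exists>i<n. norm (z - x i) < \<delta>"
    using dense_net_span_sphere[OF \<open>finite B\<close> dense \<open>\<delta> > 0\<close>] by blast
  have "\<epsilon> / 4 > 0" using \<open>\<epsilon> > 0\<close> by simp
  then obtain y where "norm y \<noteq> 0"
    and y: "\<forall>i<n. norm y * (2 * norm (x i) - \<epsilon> / 4) < norm (norm y *\<^sub>R x i + norm (x i) *\<^sub>R y)"
    using crit \<open>\<forall>i<n. x i \<in> D\<close> by blast
  then have "y \<noteq> 0" by simp
  have "(1 - \<epsilon>) * (norm z + 1) \<le> norm (z + sgn y)" if "z \<in> E" for z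
  proof (cases "z = 0")
    case False
    then have "sgn z \<in> span B" "norm (sgn z) = 1"
      using that E by (simp_all add: norm_sgn sgn_div_norm span_scale)
    then obtain i where "i < n" "norm (sgn z - x i) < \<delta>" using net by blast
    then have "(1 - 2 * (\<epsilon> / 4) - 2 * \<delta>) * (norm z + 1) \<le> norm (z + sgn y)"
      using y False \<open>y \<noteq> 0\<close> \<open>\<epsilon> > 0\<close>
      by (intro norm_add_sgn_lower_bound_near[where d = "x i"]) (auto simp: \<delta>_def)
    moreover have "(1 - \<epsilon>) * (norm z + 1) \<le> (1 - 2 * (\<epsilon> / 4) - 2 * \<delta>) * (norm z + 1)"
      using \<open>\<epsilon> > 0\<close> by (intro mult_right_mono) (auto simp: \<delta>_def min_def)
    ultimately show ?thesis by linarith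
  qed (use \<open>y \<noteq> 0\<close> \<open>\<epsilon> > 0\<close> in \<open>simp add: norm_sgn\<close>)
  then show "\<exists>v. norm v = 1 \<and> (\<forall>z\<in>E. (1 - \<epsilon>) * (norm z + norm v) \<le> norm (z + v))"
    using \<open>y \<noteq> 0\<close> by (intro exI[of _ "sgn y"]) (simp add: norm_sgn)
qed

theorem lemma6p1:
  fixes D :: "'a::banach set"
  assumes "closure D = UNIV"
  shows "(LOH TYPE('a) \<longleftrightarrow>
           (\<forall>\<epsilon>>0. \<forall>x\<in>D. \<exists>y\<in>D. norm y \<noteq> 0 \<and>
              norm (norm y *\<^sub>R x - norm x *\<^sub>R y) > norm y * (2 * norm x - \<epsilon>) \<and>
              norm (norm y *\<^sub>R x + norm x *\<^sub>R y) > norm y * (2 * norm x - \<epsilon>)))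
       \<and> (OH TYPE('a) \<longleftrightarrow>
           (\<forall>\<epsilon>>0. \<forall>n::nat. \<forall>x::nat \<Rightarrow> 'a. (\<forall>i<n. x i \<in> D) \<longrightarrow>
              (\<exists>y\<in>D. norm y \<noteq> 0 \<and>
                 (\<forall>i<n. norm (norm y *\<^sub>R x i + norm (x i) *\<^sub>R y) > norm y * (2 * norm (x i) - \<epsilon>)))))"
  using LOH_imp_dense_criterion[OF assms] dense_criterion_imp_LOH[OF assms]
    OH_imp_dense_criterion[OF assms] dense_criterion_imp_OH[OF assms]
  by blast

end
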